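(* Let $|\psi\rangle,|\phi\rangle$ be pure states in a finite-dimensional Hilbert space $\mathcal H$. For every $\alpha\in(0,1)\cup(1,2)$ and every $\beta\in(-\infty,0)\cup(0,+\infty)$, $$J_{\alpha,\beta}\big(|\psi\rangle\langle\psi|,|\phi\rangle\langle\phi|\big)=J'_{2-\alpha,\beta}\big(|\psi\rangle\langle\psi|,|\phi\rangle\langle\phi|\big).$$
   Context: For a density operator $\rho$, $\alpha\in(0,1)\cup(1,\infty)$, $\beta\in(-\infty,0)\cup(0,\infty)$, the quantum $(\alpha,\beta)$ entropy is $S_{\alpha,\beta}(\rho)=\frac{1}{(1-\alpha)\beta}\big[(\mathrm{Tr}\,\rho^{\alpha})^{\beta}-1\big]$ and the quantum $(\alpha,\beta)$-relative entropy is $D_{\alpha,\beta}(\rho\|\sigma)=\frac{1}{(1-\alpha)\beta}\big[1-(\mathrm{Tr}(\rho^{\alpha}\sigma^{1-\alpha}))^{\beta}\big]$, where any negative power of a density operator is taken only on its support (zero eigenvalues are kept as zero). The two quantum $(\alpha,\beta)$ Jensen–Shannon divergences are $J_{\alpha,\beta}(\rho,\sigma)=S_{\alpha,\beta}\big(\tfrac{\rho+\sigma}{2}\big)-\tfrac12 S_{\alpha,\beta}(\rho)-\tfrac12 S_{\alpha,\beta}(\sigma)$ and $J'_{\alpha,\beta}(\rho,\sigma)=\tfrac12\big[D_{\alpha,\beta}\big(\rho\|\tfrac{\rho+\sigma}{2}\big)+D_{\alpha,\beta}\big(\sigma\|\tfrac{\rho+\sigma}{2}\big)\big]$. *)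

theory Defs
  imports "Jordan_Normal_Form.Schur_Decomposition"
begin

text \<open>Finite-dimensional Hilbert space = complex column vectors of length n;
  operators = complex n x n matrices (Jordan_Normal_Form).\<close>

definition mtrace :: "complex mat \<Rightarrow> complex" where
  "mtrace A = (\<Sum>i<dim_row A. A $$ (i,i))"

definition unitary_mat :: "nat \<Rightarrow> complex mat \<Rightarrow> bool" where
  "unitary_mat n U \<longleftrightarrow> U \<in> carrier_mat n n \<and>
     U * mat_adjoint U = 1\<^sub>m n \<and> mat_adjoint U * U = 1\<^sub>m n"

definition psd_mat :: "complex mat \<Rightarrow> bool" where
  "psd_mat A \<longleftrightarrow> (\<exists>n U d. A \<in> carrier_mat n n \<and> unitary_mat n U \<and> (\<forall>i<n. d i \<ge> 0) \<and>
      A = U * mat_diag n (\<lambda>i. complex_of_real (d i)) * mat_adjoint U)"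

definition density_op :: "complex mat \<Rightarrow> bool" where
  "density_op A \<longleftrightarrow> psd_mat A \<and> mtrace A = 1"

text \<open>Zero eigenvalues are mapped to zero (Isabelle's convention 0 powr a = 0), so negative
  powers are taken on the support only.\<close>
definition mat_powr :: "complex mat \<Rightarrow> real \<Rightarrow> complex mat" where
  "mat_powr A a = (SOME B. \<exists>n U d. A \<in> carrier_mat n n \<and> unitary_mat n U \<and> (\<forall>i<n. d i \<ge> 0) \<and>
      A = U * mat_diag n (\<lambda>i. complex_of_real (d i)) * mat_adjoint U \<and>
      B = U * mat_diag n (\<lambda>i. complex_of_real (d i powr a)) * mat_adjoint U)"

definition ket_bra :: "complex vec \<Rightarrow> complex mat" where
  "ket_bra v = Matrix.mat (dim_vec v) (dim_vec v) (\<lambda>(i,j). v $ i * cnj (v $ j))"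

definition normalized_vec :: "complex vec \<Rightarrow> bool" where
  "normalized_vec v \<longleftrightarrow> (\<Sum>i<dim_vec v. cmod (v $ i) ^ 2) = 1"

definition ab_entropy :: "real \<Rightarrow> real \<Rightarrow> complex mat \<Rightarrow> real" where
  "ab_entropy a b \<rho> = 1 / ((1 - a) * b) * ((Re (mtrace (mat_powr \<rho> a))) powr b - 1)"

definition ab_rel_entropy :: "real \<Rightarrow> real \<Rightarrow> complex mat \<Rightarrow> complex mat \<Rightarrow> real" where
  "ab_rel_entropy a b \<rho> \<sigma> =
     1 / ((1 - a) * b) * (1 - (Re (mtrace (mat_powr \<rho> a * mat_powr \<sigma> (1 - a)))) powr b)"

definition mixture :: "complex mat \<Rightarrow> complex mat \<Rightarrow> complex mat" where
  "mixture \<rho> \<sigma> = (1/2 :: complex) \<cdot>\<^sub>m (\<rho> + \<sigma>)"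

definition JS_ab :: "real \<Rightarrow> real \<Rightarrow> complex mat \<Rightarrow> complex mat \<Rightarrow> real" where
  "JS_ab a b \<rho> \<sigma> = ab_entropy a b (mixture \<rho> \<sigma>) - ab_entropy a b \<rho> / 2 - ab_entropy a b \<sigma> / 2"

definition JS'_ab :: "real \<Rightarrow> real \<Rightarrow> complex mat \<Rightarrow> complex mat \<Rightarrow> real" where
  "JS'_ab a b \<rho> \<sigma> = (ab_rel_entropy a b \<rho> (mixture \<rho> \<sigma>) + ab_rel_entropy a b \<sigma> (mixture \<rho> \<sigma>)) / 2"

end

theory Submission
  imports Defs
begin

text \<open>
  A pure state \<open>\<rho> = |\<psi>\<rangle>\<langle>\<psi>|\<close> is a rank-one projection, so \<open>\<rho>\<^sup>p = \<rho>\<close> for every real \<open>p\<close>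
  (zero eigenvalues stay zero) and its \<open>(\<alpha>,\<beta>)\<close> entropy vanishes.  Hence \<open>J(\<rho>,\<sigma>)\<close> is the
  entropy of \<open>M = (\<rho> + \<sigma>)/2\<close>, whereas the relative entropy of \<open>\<rho>\<close> to \<open>M\<close> with parameter
  \<open>2 - \<alpha>\<close> only involves \<open>Tr(\<rho> M\<^sup>\<alpha>\<^sup>-\<^sup>1)\<close>; so everything reduces to \<open>Tr(\<rho> M\<^sup>\<alpha>\<^sup>-\<^sup>1) = Tr(M\<^sup>\<alpha>)\<close>.

  Write \<open>M = U diag(d) U\<^sup>*\<close>, \<open>a = U\<^sup>*\<psi>\<close>, \<open>b = U\<^sup>*\<phi>\<close> and \<open>c = \<langle>\<phi>,\<psi>\<rangle>\<close>.  From
  \<open>2M\<psi> = \<psi> + c\<phi>\<close> and \<open>2M\<phi> = \<phi> + c\<^sup>*\<psi>\<close> we get \<open>(2d\<^sub>i - 1) a\<^sub>i = c b\<^sub>i\<close> and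
  \<open>(2d\<^sub>i - 1) b\<^sub>i = c\<^sup>* a\<^sub>i\<close>, so \<open>|a\<^sub>i| = |b\<^sub>i|\<close> unless \<open>d\<^sub>i = 1/2\<close>.  Since both weight vectors
  \<open>|a\<^sub>i|\<^sup>2\<close> and \<open>|b\<^sub>i|\<^sup>2\<close> sum to 1, \<open>\<Sum> |a\<^sub>i|\<^sup>2 f(d\<^sub>i) = \<Sum> |b\<^sub>i|\<^sup>2 f(d\<^sub>i)\<close> for every \<open>f\<close>, and as
  \<open>|a\<^sub>i|\<^sup>2 + |b\<^sub>i|\<^sup>2 = 2d\<^sub>i\<close> both sums equal \<open>\<Sum> d\<^sub>i f(d\<^sub>i)\<close>; take \<open>f(x) = x\<^sup>\<alpha>\<^sup>-\<^sup>1\<close>.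

  Because matrix powers are defined through an arbitrary spectral decomposition, one also needs
  that \<open>U f(D) U\<^sup>*\<close> does not depend on the decomposition, and explicit decompositions of \<open>\<rho>\<close> and
  \<open>M\<close>; these come from Householder reflections, using \<open>M = xx\<^sup>* + yy\<^sup>*\<close> with the orthogonal
  vectors \<open>x, y = (\<psi> \<plusminus> \<mu>\<phi>)/2\<close> for a suitable phase \<open>\<mu>\<close>.
\<close>

section \<open>Adjoints, traces and unitary matrices\<close>

lemma dim_mat_adjoint [simp]:
  "dim_row (mat_adjoint A) = dim_col A" "dim_col (mat_adjoint A) = dim_row A"
  unfolding mat_adjoint_def by (auto simp: mat_of_rows_def)

lemma index_mat_adjoint [simp]:
  "i < dim_col A \<Longrightarrow> j < dim_row A \<Longrightarrow> mat_adjoint A $$ (i,j) = cnj (A $$ (j,i))"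
  unfolding mat_adjoint_def by (simp add: mat_of_rows_def)

lemma mat_adjoint_carrier [simp]: "A \<in> carrier_mat n m \<Longrightarrow> mat_adjoint A \<in> carrier_mat m n"
  unfolding carrier_mat_def by simp

lemma mat_adjoint_adjoint [simp]: "mat_adjoint (mat_adjoint A) = (A :: complex mat)"
  by (rule eq_matI) auto

lemma index_mult_mat_sum:
  "A \<in> carrier_mat n m \<Longrightarrow> B \<in> carrier_mat m k \<Longrightarrow> i < n \<Longrightarrow> j < k \<Longrightarrow>
    (A * B) $$ (i,j) = (\<Sum>l<m. A $$ (i,l) * B $$ (l,j))"
  by (simp add: scalar_prod_def atLeast0LessThan)

lemma mat_adjoint_mult:
  assumes A: "(A :: complex mat) \<in> carrier_mat n m" and B: "B \<in> carrier_mat m k"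
  shows "mat_adjoint (A * B) = mat_adjoint B * mat_adjoint A"
proof (rule eq_matI)
  fix i j assume "i < dim_row (mat_adjoint B * mat_adjoint A)" "j < dim_col (mat_adjoint B * mat_adjoint A)"
  hence i: "i < k" and j: "j < n" using A B by auto
  have "mat_adjoint (A * B) $$ (i,j) = cnj ((A * B) $$ (j,i))" using A B i j by simp
  also have "\<dots> = (\<Sum>l<m. cnj (B $$ (l,i)) * cnj (A $$ (j,l)))"
    by (simp add: index_mult_mat_sum[OF A B j i] mult.commute)
  also have "\<dots> = (mat_adjoint B * mat_adjoint A) $$ (i,j)"
    using A B i j by (simp add: index_mult_mat_sum[of _ k m _ n] del: index_mult_mat)
  finally show "mat_adjoint (A * B) $$ (i,j) = (mat_adjoint B * mat_adjoint A) $$ (i,j)" .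
qed (use A B in auto)

lemma mtrace_eq_sum: "A \<in> carrier_mat n n \<Longrightarrow> mtrace A = (\<Sum>i<n. A $$ (i,i))"
  unfolding mtrace_def by simp

lemma mtrace_mult_comm:
  assumes "A \<in> carrier_mat n m" "B \<in> carrier_mat m n"
  shows "mtrace (A * B) = mtrace (B * A)"
proof -
  have "mtrace (A * B) = (\<Sum>i<n. \<Sum>l<m. A $$ (i,l) * B $$ (l,i))"
    using assms by (simp add: mtrace_eq_sum[of _ n] index_mult_mat_sum[OF assms] del: index_mult_mat)
  also have "\<dots> = (\<Sum>l<m. \<Sum>i<n. B $$ (l,i) * A $$ (i,l))"
    by (subst sum.swap) (simp add: mult.commute)
  also have "\<dots> = mtrace (B * A)"
    using assms by (simp add: mtrace_eq_sum[of _ m] index_mult_mat_sum[OF assms(2,1)] del: index_mult_mat)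
  finally show ?thesis .
qed

lemma mtrace_mat_diag: "mtrace (mat_diag n f) = (\<Sum>i<n. f i)"
  by (simp add: mtrace_eq_sum[of _ n] mat_diag_def)

lemma mat_diag_cong: "(\<And>i. i < n \<Longrightarrow> f i = g i) \<Longrightarrow> mat_diag n f = mat_diag n g"
  by (rule eq_matI) (auto simp: mat_diag_def)

lemma unitary_mat_carrier: "unitary_mat n U \<Longrightarrow> U \<in> carrier_mat n n"
  unfolding unitary_mat_def by simp

lemma unitary_matD:
  "unitary_mat n U \<Longrightarrow> mat_adjoint U * U = 1\<^sub>m n"
  "unitary_mat n U \<Longrightarrow> U * mat_adjoint U = 1\<^sub>m n"
  unfolding unitary_mat_def by simp_all

lemma unitary_matI:
  assumes "U \<in> carrier_mat n n" "mat_adjoint U * U = 1\<^sub>m n"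
  shows "unitary_mat n U"
  unfolding unitary_mat_def
  using assms mat_mult_left_right_inverse[OF mat_adjoint_carrier[OF assms(1)] assms] by simp

lemma unitary_mat_adjoint: "unitary_mat n U \<Longrightarrow> unitary_mat n (mat_adjoint U)"
  unfolding unitary_mat_def by simp

lemma unitary_mat_mult:
  assumes A: "unitary_mat n A" and B: "unitary_mat n B"
  shows "unitary_mat n (A * B)"
proof (rule unitary_matI)
  have Ac: "A \<in> carrier_mat n n" and Bc: "B \<in> carrier_mat n n"
    using A B unitary_mat_carrier by auto
  then show "A * B \<in> carrier_mat n n" by simp
  have "mat_adjoint (A * B) * (A * B) = mat_adjoint B * (mat_adjoint A * A) * B"
    using Ac Bc
    by (simp add: mat_adjoint_mult[OF Ac Bc] assoc_mult_mat[of _ n n _ n _ n] mult_carrier_mat[of _ n n _ n])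
  also have "\<dots> = 1\<^sub>m n"
    using Bc by (simp add: unitary_matD[OF A] unitary_matD[OF B])
  finally show "mat_adjoint (A * B) * (A * B) = 1\<^sub>m n" .
qed

lemma unitary_mat_diag:
  assumes "\<And>i. i < n \<Longrightarrow> cmod (f i) = 1"
  shows "unitary_mat n (mat_diag n f)"
proof (rule unitary_matI)
  have "cnj (f i) * f i = 1" if "i < n" for i
    using assms[OF that] by (metis complex_norm_square mult.commute of_real_1 power_one)
  then show "mat_adjoint (mat_diag n f) * mat_diag n f = 1\<^sub>m n"
    by (subst mat_diag_mult_right[of _ n n]) (auto simp: mat_diag_def)
qed simp

lemma unitary_mat_cancel:
  assumes U: "unitary_mat n U" and X: "X \<in> carrier_mat n k"
  shows "mat_adjoint U * (U * X) = X" "U * (mat_adjoint U * X) = X"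
proof -
  have Uc: "U \<in> carrier_mat n n" using U unitary_mat_carrier by auto
  show "mat_adjoint U * (U * X) = X"
    using Uc X by (simp add: assoc_mult_mat[of _ n n _ n _ k, symmetric] unitary_matD[OF U])
  show "U * (mat_adjoint U * X) = X"
    using Uc X by (simp add: assoc_mult_mat[of _ n n _ n _ k, symmetric] unitary_matD[OF U])
qed

lemma unitary_mat_conj_cancel:
  assumes U: "unitary_mat n U" and D: "D \<in> carrier_mat n n"
  shows "mat_adjoint U * (U * D * mat_adjoint U) * U = D"
proof -
  have Uc: "U \<in> carrier_mat n n" using U unitary_mat_carrier by auto
  have "mat_adjoint U * (U * D * mat_adjoint U) * U = (mat_adjoint U * U) * D * (mat_adjoint U * U)"
    using Uc D by (simp add: assoc_mult_mat[of _ n n _ n _ n] mult_carrier_mat[of _ n n _ n])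
  also have "\<dots> = D" using D by (simp add: unitary_matD[OF U])
  finally show ?thesis .
qed

lemma mtrace_unitary_conj:
  assumes U: "unitary_mat n U" and X: "X \<in> carrier_mat n n"
  shows "mtrace (U * X * mat_adjoint U) = mtrace X"
proof -
  have Uc: "U \<in> carrier_mat n n" using U unitary_mat_carrier by auto
  have "mtrace (U * X * mat_adjoint U) = mtrace (mat_adjoint U * (U * X))"
    by (rule mtrace_mult_comm[of _ n n]) (use Uc X in auto)
  also have "mat_adjoint U * (U * X) = (mat_adjoint U * U) * X"
    using Uc X by (simp add: assoc_mult_mat[of _ n n _ n _ n])
  also have "\<dots> = X" using X by (simp add: unitary_matD[OF U])
  finally show ?thesis .
qed

lemma ket_bra_carrier [simp]: "v \<in> carrier_vec n \<Longrightarrow> ket_bra v \<in> carrier_mat n n"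
  unfolding ket_bra_def by simp

lemma dim_ket_bra [simp]: "dim_row (ket_bra v) = dim_vec v" "dim_col (ket_bra v) = dim_vec v"
  unfolding ket_bra_def by auto

lemma index_ket_bra:
  "v \<in> carrier_vec n \<Longrightarrow> i < n \<Longrightarrow> j < n \<Longrightarrow> ket_bra v $$ (i,j) = v $ i * cnj (v $ j)"
  unfolding ket_bra_def by simp

lemma ket_bra_zero [simp]: "ket_bra (0\<^sub>v n) = 0\<^sub>m n n"
  by (rule eq_matI) (auto simp: ket_bra_def)

lemma ket_bra_smult: "ket_bra (c \<cdot>\<^sub>v v) = (c * cnj c) \<cdot>\<^sub>m ket_bra v"
  by (rule eq_matI) (auto simp: ket_bra_def)

lemma ket_bra_eq_mult:
  "v \<in> carrier_vec n \<Longrightarrow> ket_bra v = mat_of_cols n [v] * mat_adjoint (mat_of_cols n [v])"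
  by (rule eq_matI) (auto simp: ket_bra_def scalar_prod_def mat_of_cols_Cons_index_0)

lemma mat_of_cols_mult_vec:
  "A \<in> carrier_mat m n \<Longrightarrow> v \<in> carrier_vec n \<Longrightarrow> mat_of_cols m [A *\<^sub>v v] = A * mat_of_cols n [v]"
proof (rule eq_matI)
  fix i j assume A: "A \<in> carrier_mat m n" and v: "v \<in> carrier_vec n"
    and i: "i < dim_row (A * mat_of_cols n [v])" and j: "j < dim_col (A * mat_of_cols n [v])"
  have "col (mat_of_cols n [v]) 0 = v" using v by simp
  then show "mat_of_cols m [A *\<^sub>v v] $$ (i, j) = (A * mat_of_cols n [v]) $$ (i, j)"
    using A i j by (simp add: mat_of_cols_Cons_index_0)
qed auto

lemma ket_bra_mat_adjoint_mult_vec: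
  assumes U: "U \<in> carrier_mat n m" and v: "v \<in> carrier_vec n"
  shows "mat_adjoint U * ket_bra v * U = ket_bra (mat_adjoint U *\<^sub>v v)"
proof -
  define V where "V = mat_of_cols n [v]"
  have Vc: "V \<in> carrier_mat n 1" unfolding V_def carrier_mat_def by simp
  have Uh: "mat_adjoint U \<in> carrier_mat m n" using U by simp
  have Vh: "mat_adjoint V \<in> carrier_mat 1 n" using Vc by simp
  have "mat_adjoint U * ket_bra v * U = (mat_adjoint U * V) * mat_adjoint V * U"
    unfolding ket_bra_eq_mult[OF v] V_def[symmetric] assoc_mult_mat[OF Uh Vc Vh] ..
  also have "\<dots> = (mat_adjoint U * V) * (mat_adjoint V * U)"
    by (rule assoc_mult_mat[OF mult_carrier_mat[OF Uh Vc] Vh U])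
  also have "mat_adjoint V * U = mat_adjoint (mat_adjoint U * V)"
    using U Vc by (simp add: mat_adjoint_mult[of _ m n _ 1])
  also have "mat_adjoint U * V = mat_of_cols m [mat_adjoint U *\<^sub>v v]"
    unfolding V_def using U v by (simp add: mat_of_cols_mult_vec[of _ m n])
  finally show ?thesis
    using ket_bra_eq_mult[OF mult_mat_vec_carrier[OF Uh v]] by simp
qed

lemma mtrace_ket_bra:
  "v \<in> carrier_vec n \<Longrightarrow> mtrace (ket_bra v) = complex_of_real (\<Sum>i<n. cmod (v $ i) ^ 2)"
  by (simp add: mtrace_eq_sum[of _ n] index_ket_bra flip: complex_norm_square)

lemma sum_cmod_sq_unitary_mult_vec:
  assumes U: "unitary_mat n U" and v: "v \<in> carrier_vec n"
  shows "(\<Sum>i<n. cmod ((U *\<^sub>v v) $ i) ^ 2) = (\<Sum>i<n. cmod (v $ i) ^ 2)"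
proof -
  have Uc: "U \<in> carrier_mat n n" using U unitary_mat_carrier by auto
  have "complex_of_real (\<Sum>i<n. cmod ((U *\<^sub>v v) $ i) ^ 2)
      = mtrace (mat_adjoint (mat_adjoint U) * ket_bra v * mat_adjoint U)"
    using ket_bra_mat_adjoint_mult_vec[of "mat_adjoint U" n n v] Uc v
    by (simp add: mtrace_ket_bra[of _ n])
  also have "\<dots> = complex_of_real (\<Sum>i<n. cmod (v $ i) ^ 2)"
    using mtrace_unitary_conj[OF U, of "ket_bra v"] v by (simp add: mtrace_ket_bra)
  finally show ?thesis by (simp only: of_real_eq_iff)
qed

section \<open>Spectral decompositions and matrix powers\<close>

lemma index_unitary_conj_mat_diag:
  assumes U: "U \<in> carrier_mat n n" and i: "i < n" and j: "j < n"
  shows "(U * mat_diag n f * mat_adjoint U) $$ (i,j) = (\<Sum>l<n. U $$ (i,l) * f l * cnj (U $$ (j,l)))"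
  using U i j by (simp add: mat_diag_mult_right[OF U] index_mult_mat_sum[of _ n n _ n] del: index_mult_mat)

lemma mat_diag_intertwine_fun:
  fixes W :: "'a :: field mat"
  assumes W: "W \<in> carrier_mat n n" and WD: "W * mat_diag n d = mat_diag n e * W"
  shows "W * mat_diag n (\<lambda>i. f (d i)) = mat_diag n (\<lambda>i. f (e i)) * W"
proof (rule eq_matI)
  fix i j assume "i < dim_row (mat_diag n (\<lambda>i. f (e i)) * W)"
    "j < dim_col (mat_diag n (\<lambda>i. f (e i)) * W)"
  hence i: "i < n" and j: "j < n" using W by (auto simp: mat_diag_def)
  have "W $$ (i,j) * d j = e i * W $$ (i,j)"
    using arg_cong[OF WD, of "\<lambda>A. A $$ (i,j)"] i j W
    by (simp add: mat_diag_mult_right[OF W] mat_diag_mult_left[OF W])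
  hence "W $$ (i,j) = 0 \<or> d j = e i" by (auto simp: mult.commute)
  thus "(W * mat_diag n (\<lambda>i. f (d i))) $$ (i,j) = (mat_diag n (\<lambda>i. f (e i)) * W) $$ (i,j)"
    using i j W by (auto simp: mat_diag_mult_right[OF W] mat_diag_mult_left[OF W])
qed (use W in \<open>auto simp: mat_diag_def\<close>)

lemma unitary_conj_mat_diag_fun_eq:
  assumes U: "unitary_mat n U" and V: "unitary_mat n V"
    and eq: "U * mat_diag n d * mat_adjoint U = V * mat_diag n e * mat_adjoint V"
  shows "U * mat_diag n (\<lambda>i. f (d i)) * mat_adjoint U = V * mat_diag n (\<lambda>i. f (e i)) * mat_adjoint V"
proof -
  have Uc: "U \<in> carrier_mat n n" and Vc: "V \<in> carrier_mat n n" using U V unitary_mat_carrier by auto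
  note simps = assoc_mult_mat[of _ n n _ n _ n] mult_carrier_mat[of _ n n _ n] right_mult_one_mat[of _ n n]
    unitary_mat_cancel[OF U, where k=n] unitary_mat_cancel[OF V, where k=n] unitary_matD[OF U] unitary_matD[OF V]
  define W where "W = mat_adjoint V * U"
  have Wc: "W \<in> carrier_mat n n" unfolding W_def using Uc Vc by (simp add: mult_carrier_mat[of _ n n])
  have "W * mat_diag n d = mat_adjoint V * (U * mat_diag n d * mat_adjoint U) * U"
    unfolding W_def using Uc Vc by (simp add: simps)
  also have "\<dots> = mat_diag n e * W"
    unfolding eq W_def using Uc Vc by (simp add: simps)
  finally have "W * mat_diag n (\<lambda>i. f (d i)) = mat_diag n (\<lambda>i. f (e i)) * W"
    by (rule mat_diag_intertwine_fun[OF Wc])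
  hence "V * (W * mat_diag n (\<lambda>i. f (d i))) * mat_adjoint U
       = V * (mat_diag n (\<lambda>i. f (e i)) * W) * mat_adjoint U" by simp
  thus ?thesis unfolding W_def using Uc Vc by (simp add: simps)
qed

lemma psd_matI:
  "unitary_mat n U \<Longrightarrow> (\<forall>i<n. d i \<ge> 0) \<Longrightarrow>
    psd_mat (U * mat_diag n (\<lambda>i. complex_of_real (d i)) * mat_adjoint U)"
  unfolding psd_mat_def using unitary_mat_carrier
  by (intro exI[of _ n] exI[of _ U] exI[of _ d]) (auto simp: mult_carrier_mat[of _ n n _ n])

lemma psd_matE:
  assumes "psd_mat A" "A \<in> carrier_mat n n"
  obtains U d where "unitary_mat n U" "\<forall>i<n. d i \<ge> 0"
    "A = U * mat_diag n (\<lambda>i. complex_of_real (d i)) * mat_adjoint U"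
  using assms unfolding psd_mat_def by (metis carrier_matD(1))

lemma mat_powr_eq:
  assumes U: "unitary_mat n U" and d: "\<forall>i<n. d i \<ge> 0"
    and A: "A = U * mat_diag n (\<lambda>i. complex_of_real (d i)) * mat_adjoint U"
  shows "mat_powr A p = U * mat_diag n (\<lambda>i. complex_of_real (d i powr p)) * mat_adjoint U"
proof -
  have Ac: "A \<in> carrier_mat n n"
    using A unitary_mat_carrier[OF U] by (simp add: mult_carrier_mat[of _ n n _ n])
  let ?P = "\<lambda>B. \<exists>n U d. A \<in> carrier_mat n n \<and> unitary_mat n U \<and> (\<forall>i<n. d i \<ge> 0) \<and>
      A = U * mat_diag n (\<lambda>i. complex_of_real (d i)) * mat_adjoint U \<and>
      B = U * mat_diag n (\<lambda>i. complex_of_real (d i powr p)) * mat_adjoint U"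
  have "\<exists>B. ?P B" using Ac U d A by blast
  from someI_ex[OF this] obtain m V e where
    m: "A \<in> carrier_mat m m" and V: "unitary_mat m V" and
    Ae: "A = V * mat_diag m (\<lambda>i. complex_of_real (e i)) * mat_adjoint V" and
    B: "mat_powr A p = V * mat_diag m (\<lambda>i. complex_of_real (e i powr p)) * mat_adjoint V"
    unfolding mat_powr_def by blast
  have "m = n" using m Ac by auto
  show ?thesis
    unfolding B using unitary_conj_mat_diag_fun_eq[OF V[unfolded \<open>m = n\<close>] U, of
        "\<lambda>i. complex_of_real (e i)" "\<lambda>i. complex_of_real (d i)" "\<lambda>z. complex_of_real (Re z powr p)"]
      A Ae \<open>m = n\<close> by simp
qed

lemma mtrace_mat_powr:
  assumes U: "unitary_mat n U" and d: "\<forall>i<n. d i \<ge> 0"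
    and A: "A = U * mat_diag n (\<lambda>i. complex_of_real (d i)) * mat_adjoint U"
  shows "mtrace (mat_powr A p) = complex_of_real (\<Sum>i<n. d i powr p)"
  unfolding mat_powr_eq[OF U d A] mtrace_unitary_conj[OF U mat_diag_dim] mtrace_mat_diag by simp

lemma mtrace_ket_bra_mult_unitary_conj_mat_diag:
  assumes U: "U \<in> carrier_mat n n" and v: "v \<in> carrier_vec n"
  shows "mtrace (ket_bra v * (U * mat_diag n f * mat_adjoint U))
       = (\<Sum>i<n. complex_of_real (cmod ((mat_adjoint U *\<^sub>v v) $ i) ^ 2) * f i)"
proof -
  have Uh: "mat_adjoint U \<in> carrier_mat n n" using U by simp
  have a: "mat_adjoint U *\<^sub>v v \<in> carrier_vec n" by (rule mult_mat_vec_carrier[OF Uh v])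
  note simps = assoc_mult_mat[of _ n n _ n _ n] mult_carrier_mat[of _ n n _ n]
  have "mtrace (ket_bra v * (U * mat_diag n f * mat_adjoint U))
      = mtrace ((ket_bra v * U * mat_diag n f) * mat_adjoint U)"
    using U v by (simp add: simps)
  also have "\<dots> = mtrace (mat_adjoint U * (ket_bra v * U * mat_diag n f))"
    by (rule mtrace_mult_comm[of _ n n]) (use U v in \<open>simp_all add: simps\<close>)
  also have "\<dots> = mtrace (ket_bra (mat_adjoint U *\<^sub>v v) * mat_diag n f)"
    using U v by (simp add: simps ket_bra_mat_adjoint_mult_vec[OF U v, symmetric])
  also have "\<dots> = (\<Sum>i<n. complex_of_real (cmod ((mat_adjoint U *\<^sub>v v) $ i) ^ 2) * f i)"
    using a by (simp add: mtrace_eq_sum[of _ n] mat_diag_mult_right[of _ n n] index_ket_bra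
        flip: complex_norm_square)
  finally show ?thesis .
qed

section \<open>Unitaries with prescribed columns\<close>

text \<open>For \<open>w = 0\<close> the coefficient \<open>2/0 = 0\<close> makes this the identity.\<close>

definition householder :: "complex vec \<Rightarrow> complex mat" where
  "householder w = 1\<^sub>m (dim_vec w)
     - complex_of_real (2 / (\<Sum>i<dim_vec w. cmod (w $ i) ^ 2)) \<cdot>\<^sub>m ket_bra w"

lemma index_householder:
  assumes "w \<in> carrier_vec n" "i < n" "j < n"
  shows "householder w $$ (i,j)
       = (if i = j then 1 else 0) - complex_of_real (2 / (\<Sum>l<n. cmod (w $ l) ^ 2)) * w $ i * cnj (w $ j)"
  using assms by (simp add: householder_def index_ket_bra)

lemma householder_carrier: "w \<in> carrier_vec n \<Longrightarrow> householder w \<in> carrier_mat n n"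
  unfolding householder_def carrier_mat_def by simp

lemma householder_unitary:
  assumes w: "w \<in> carrier_vec n"
  shows "unitary_mat n (householder w)"
proof (rule unitary_matI[OF householder_carrier[OF w]])
  define N where "N = (\<Sum>l<n. cmod (w $ l) ^ 2)"
  define t where "t = complex_of_real (2 / N)"
  have wN: "(\<Sum>l<n. w $ l * cnj (w $ l)) = complex_of_real N"
    unfolding N_def by (simp flip: complex_norm_square)
  have t2: "t * t * complex_of_real N = 2 * t"
    unfolding t_def by (cases "N = 0") (auto simp: field_simps)
  define H where "H i j = (if i = j then 1 else 0) - t * w $ i * cnj (w $ j)" for i j
  have H: "householder w $$ (i,j) = H i j" if "i < n" "j < n" for i j
    unfolding H_def t_def N_def by (rule index_householder[OF w that])
  have Hc: "cnj (H l i) = H i l" for l i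
    unfolding H_def t_def by auto
  have HH: "(\<Sum>l<n. H i l * H l j) = (if i = j then 1 else 0)" if "i < n" "j < n" for i j
  proof -
    have "(\<Sum>l<n. H i l * H l j) = (\<Sum>l<n. (if l = i then (if i = j then 1 else 0) else 0)
        - (if l = i then t * w $ l * cnj (w $ j) else 0)
        - (if l = j then t * w $ i * cnj (w $ l) else 0)
        + (t * t * w $ i * cnj (w $ j)) * (w $ l * cnj (w $ l)))"
      unfolding H_def by (rule sum.cong) (auto simp: algebra_simps)
    also have "\<dots> = (if i = j then 1 else 0) - 2 * t * w $ i * cnj (w $ j)
        + t * t * complex_of_real N * w $ i * cnj (w $ j)"
      using that by (simp add: sum.distrib sum_subtractf wN flip: sum_distrib_left)
    finally show ?thesis unfolding t2 by simp
  qed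
  show "mat_adjoint (householder w) * householder w = 1\<^sub>m n"
  proof (rule eq_matI)
    fix i j assume "i < dim_row (1\<^sub>m n :: complex mat)" "j < dim_col (1\<^sub>m n :: complex mat)"
    hence i: "i < n" and j: "j < n" by auto
    have "(mat_adjoint (householder w) * householder w) $$ (i,j) = (\<Sum>l<n. H i l * H l j)"
      using householder_carrier[OF w] i j
      by (simp add: index_mult_mat_sum[of _ n n _ n] H Hc del: index_mult_mat)
    thus "(mat_adjoint (householder w) * householder w) $$ (i,j) = 1\<^sub>m n $$ (i,j)"
      using HH[OF i j] i j by simp
  qed (use householder_carrier[OF w] in auto)
qed

lemma householder_mult_phase_column:
  assumes x: "x \<in> carrier_vec n" and nx: "(\<Sum>i<n. cmod (x $ i) ^ 2) = 1" and k: "k < n"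
    and \<mu>: "cmod \<mu> = 1" and xk: "x $ k = complex_of_real (cmod (x $ k)) * \<mu>" and i: "i < n"
  defines "w \<equiv> vec n (\<lambda>i. x $ i - (if i = k then \<mu> else 0))"
  shows "householder w $$ (i,k) * \<mu> = x $ i"
proof -
  define r where "r = cmod (x $ k)"
  have w: "w \<in> carrier_vec n" unfolding w_def by simp
  have wk: "w $ k = complex_of_real (r - 1) * \<mu>"
    unfolding w_def r_def using xk k by (simp add: algebra_simps)
  define N where "N = (\<Sum>i<n. cmod (w $ i) ^ 2)"
  have "N = cmod (w $ k) ^ 2 + (\<Sum>i\<in>{..<n} - {k}. cmod (x $ i) ^ 2)"
    unfolding N_def using k by (simp add: sum.remove[of _ k] w_def)
  also have "(\<Sum>i\<in>{..<n} - {k}. cmod (x $ i) ^ 2) = 1 - r ^ 2"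
    using nx k unfolding r_def by (simp add: sum.remove[of _ k])
  finally have N: "N = 2 - 2 * r"
    unfolding wk norm_mult \<mu> norm_of_real by (simp add: power2_eq_square algebra_simps)
  have reflect: "complex_of_real (2 / N) * w $ i * (cnj (w $ k) * \<mu>) = - w $ i"
  proof (cases "N = 0")
    case True
    hence "w $ i = 0" using i unfolding N_def by (subst (asm) sum_nonneg_eq_0_iff) auto
    thus ?thesis by simp
  next
    case False
    have "cnj \<mu> * \<mu> = 1" using \<mu> by (metis complex_norm_square mult.commute of_real_1 power_one)
    hence "cnj (w $ k) * \<mu> = complex_of_real (r - 1)" unfolding wk by simp
    hence "complex_of_real (2 / N) * w $ i * (cnj (w $ k) * \<mu>) = complex_of_real (2 / N * (r - 1)) * w $ i"
      by simp
    also have "2 / N * (r - 1) = -1" using False unfolding N by (simp add: field_simps)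
    finally show ?thesis by simp
  qed
  have "householder w $$ (i,k) * \<mu>
      = (if i = k then \<mu> else 0) - complex_of_real (2 / N) * w $ i * (cnj (w $ k) * \<mu>)"
    unfolding index_householder[OF w i k] N_def[symmetric] by (simp add: algebra_simps)
  also have "\<dots> = x $ i" using reflect i unfolding w_def by simp
  finally show ?thesis .
qed

lemma unitary_mat_with_column:
  assumes x: "x \<in> carrier_vec n" and nx: "(\<Sum>i<n. cmod (x $ i) ^ 2) = 1" and k: "k < n"
  obtains U where "unitary_mat n U" "\<And>i. i < n \<Longrightarrow> U $$ (i,k) = x $ i"
    "\<And>i j. i < n \<Longrightarrow> j < n \<Longrightarrow> j \<noteq> k \<Longrightarrow> x $ j = 0 \<Longrightarrow> U $$ (i,j) = (if i = j then 1 else 0)"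
proof -
  define \<mu> where "\<mu> = (if x $ k = 0 then 1 else x $ k / complex_of_real (cmod (x $ k)))"
  have \<mu>: "cmod \<mu> = 1" unfolding \<mu>_def by (simp add: norm_divide)
  have xk: "x $ k = complex_of_real (cmod (x $ k)) * \<mu>" unfolding \<mu>_def by auto
  define w where "w = vec n (\<lambda>i. x $ i - (if i = k then \<mu> else 0))"
  have w: "w \<in> carrier_vec n" unfolding w_def by simp
  define D where "D j = (if j = k then \<mu> else 1)" for j
  define U where "U = householder w * mat_diag n D"
  have U_idx: "U $$ (i,j) = householder w $$ (i,j) * D j" if "i < n" "j < n" for i j
    unfolding U_def using that householder_carrier[OF w] by (simp add: mat_diag_mult_right[of _ n n])
  show thesis
  proof
    show "unitary_mat n U"
      unfolding U_def using \<mu>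
      by (intro unitary_mat_mult householder_unitary[OF w] unitary_mat_diag) (simp add: D_def)
    show "U $$ (i,k) = x $ i" if "i < n" for i
      unfolding U_idx[OF that k] D_def w_def using householder_mult_phase_column[OF x nx k \<mu> xk that] by simp
    show "U $$ (i,j) = (if i = j then 1 else 0)" if "i < n" "j < n" "j \<noteq> k" "x $ j = 0" for i j
      using that unfolding U_idx[OF that(1,2)] index_householder[OF w that(1,2)]
      by (simp add: D_def w_def)
  qed
qed

lemma unitary_mat_with_two_columns:
  assumes u: "u \<in> carrier_vec n" and nu: "(\<Sum>i<n. cmod (u $ i) ^ 2) = 1"
    and v: "v \<in> carrier_vec n" and nv: "(\<Sum>i<n. cmod (v $ i) ^ 2) = 1"
    and orth: "(\<Sum>i<n. u $ i * cnj (v $ i)) = 0"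
  obtains U where "unitary_mat n U" "1 < n"
    "\<And>i. i < n \<Longrightarrow> U $$ (i,0) = u $ i" "\<And>i. i < n \<Longrightarrow> U $$ (i,1) = v $ i"
proof -
  have n: "0 < n" using nu by (cases n) auto
  obtain U1 where U1: "unitary_mat n U1" and col1: "\<And>i. i < n \<Longrightarrow> U1 $$ (i,0) = u $ i"
    using unitary_mat_with_column[OF u nu n] by metis
  have U1c: "U1 \<in> carrier_mat n n" using U1 unitary_mat_carrier by auto
  define z where "z = mat_adjoint U1 *\<^sub>v v"
  have zc: "z \<in> carrier_vec n" unfolding z_def using U1c v by (simp add: mult_mat_vec_carrier[of _ n n])
  have nz: "(\<Sum>i<n. cmod (z $ i) ^ 2) = 1"
    unfolding z_def sum_cmod_sq_unitary_mult_vec[OF unitary_mat_adjoint[OF U1] v] by (rule nv)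
  have "z $ 0 = cnj (\<Sum>m<n. u $ m * cnj (v $ m))"
    using U1c v n col1 unfolding z_def by (simp add: scalar_prod_def atLeast0LessThan mult.commute)
  hence z0: "z $ 0 = 0" using orth by simp
  have n1: "1 < n" using n nz z0 by (cases "n = 1") auto
  \<comment> \<open>\<open>z\<^sub>0 = 0\<close>, so the second reflection leaves the first column of \<open>U1\<close> alone.\<close>
  obtain U2 where U2: "unitary_mat n U2" and col2: "\<And>i. i < n \<Longrightarrow> U2 $$ (i,1) = z $ i"
    and colj: "\<And>i j. i < n \<Longrightarrow> j < n \<Longrightarrow> j \<noteq> 1 \<Longrightarrow> z $ j = 0 \<Longrightarrow> U2 $$ (i,j) = (if i = j then 1 else 0)"
    using unitary_mat_with_column[OF zc nz n1] by metis
  have U2c: "U2 \<in> carrier_mat n n" using U2 unitary_mat_carrier by auto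
  show thesis
  proof
    show "unitary_mat n (U1 * U2)" by (rule unitary_mat_mult[OF U1 U2])
    show "1 < n" by (rule n1)
    show "(U1 * U2) $$ (i,0) = u $ i" if i: "i < n" for i
    proof -
      have "(U1 * U2) $$ (i,0) = (\<Sum>l<n. if l = 0 then U1 $$ (i,0) else 0)"
        unfolding index_mult_mat_sum[OF U1c U2c i n] by (rule sum.cong) (use colj[OF _ n _ z0] in auto)
      thus ?thesis using n col1 i by simp
    qed
    show "(U1 * U2) $$ (i,1) = v $ i" if i: "i < n" for i
    proof -
      have "col U2 1 = z" using col2 U2c zc n1 by (intro eq_vecI) auto
      hence "(U1 * U2) $$ (i,1) = (U1 *\<^sub>v z) $ i" using U1c U2c i n1 by simp
      also have "U1 *\<^sub>v z = (U1 * mat_adjoint U1) *\<^sub>v v"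
        unfolding z_def by (rule assoc_mult_mat_vec[OF U1c mat_adjoint_carrier[OF U1c] v, symmetric])
      also have "\<dots> = v" using unitary_matD(2)[OF U1] v by simp
      finally show ?thesis .
    qed
  qed
qed

section \<open>Positive semidefiniteness of pure states and their mixtures\<close>

lemma vec_eq_smult_unit_vec:
  assumes x: "x \<in> carrier_vec n" and x0: "x \<noteq> 0\<^sub>v n"
  obtains a u where "a > 0" "u \<in> carrier_vec n" "(\<Sum>i<n. cmod (u $ i) ^ 2) = 1"
    "x = complex_of_real a \<cdot>\<^sub>v u"
proof -
  define N where "N = (\<Sum>i<n. cmod (x $ i) ^ 2)"
  obtain i where i: "i < n" "x $ i \<noteq> 0"
  proof (rule ccontr)
    assume "\<not> thesis"
    hence "x = 0\<^sub>v n" using x that by (intro eq_vecI) auto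
    thus False using x0 by simp
  qed
  have "cmod (x $ i) ^ 2 \<le> N"
    unfolding N_def using i by (intro member_le_sum) auto
  moreover have "0 < cmod (x $ i) ^ 2" using i by simp
  ultimately have N: "N > 0" by linarith
  define u where "u = complex_of_real (1 / sqrt N) \<cdot>\<^sub>v x"
  show thesis
  proof
    show "sqrt N > 0" using N by simp
    show "u \<in> carrier_vec n" unfolding u_def using x by simp
    have "(\<Sum>i<n. cmod (u $ i) ^ 2) = (\<Sum>i<n. cmod (x $ i) ^ 2 / N)"
      unfolding u_def using x N by (intro sum.cong) (auto simp: norm_divide power_divide)
    also have "\<dots> = 1" using N unfolding N_def by (simp flip: sum_divide_distrib)
    finally show "(\<Sum>i<n. cmod (u $ i) ^ 2) = 1" .
    show "x = complex_of_real (sqrt N) \<cdot>\<^sub>v u"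
      unfolding u_def smult_smult_assoc using N by (simp flip: of_real_mult)
  qed
qed

lemma psd_mat_zero: "psd_mat (0\<^sub>m n n)"
proof -
  have "mat_diag n (\<lambda>i. complex_of_real 0) = 0\<^sub>m n n"
    by (rule eq_matI) (auto simp: mat_diag_def)
  hence "0\<^sub>m n n = 1\<^sub>m n * mat_diag n (\<lambda>i. complex_of_real 0) * mat_adjoint (1\<^sub>m n)"
    by simp
  moreover have "unitary_mat n (1\<^sub>m n)"
    using unitary_mat_diag[of n "\<lambda>_. 1"] by simp
  ultimately show ?thesis using psd_matI[of n "1\<^sub>m n" "\<lambda>_. 0"] by simp
qed

lemma psd_mat_smult_ket_bra:
  assumes u: "u \<in> carrier_vec n" and nu: "(\<Sum>i<n. cmod (u $ i) ^ 2) = 1" and lam: "lam \<ge> 0"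
  shows "psd_mat (complex_of_real lam \<cdot>\<^sub>m ket_bra u)"
proof -
  have n: "0 < n" using nu by (cases n) auto
  obtain U where U: "unitary_mat n U" and col: "\<And>i. i < n \<Longrightarrow> U $$ (i,0) = u $ i"
    using unitary_mat_with_column[OF u nu n] by metis
  have Uc: "U \<in> carrier_mat n n" using U unitary_mat_carrier by auto
  define d where "d i = (if i = 0 then lam else 0)" for i :: nat
  have "psd_mat (U * mat_diag n (\<lambda>i. complex_of_real (d i)) * mat_adjoint U)"
    by (rule psd_matI[OF U]) (simp add: d_def lam)
  moreover have "complex_of_real lam \<cdot>\<^sub>m ket_bra u = U * mat_diag n (\<lambda>i. complex_of_real (d i)) * mat_adjoint U"
  proof (rule eq_matI)
    fix i j assume "i < dim_row (U * mat_diag n (\<lambda>i. complex_of_real (d i)) * mat_adjoint U)"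
      "j < dim_col (U * mat_diag n (\<lambda>i. complex_of_real (d i)) * mat_adjoint U)"
    hence i: "i < n" and j: "j < n" using Uc by auto
    have "(U * mat_diag n (\<lambda>i. complex_of_real (d i)) * mat_adjoint U) $$ (i,j)
        = (\<Sum>l<n. if l = 0 then U $$ (i,0) * complex_of_real lam * cnj (U $$ (j,0)) else 0)"
      unfolding index_unitary_conj_mat_diag[OF Uc i j] by (rule sum.cong) (auto simp: d_def)
    also have "\<dots> = (complex_of_real lam \<cdot>\<^sub>m ket_bra u) $$ (i,j)"
      using n col i j u by (simp add: index_ket_bra)
    finally show "(complex_of_real lam \<cdot>\<^sub>m ket_bra u) $$ (i,j)
      = (U * mat_diag n (\<lambda>i. complex_of_real (d i)) * mat_adjoint U) $$ (i,j)" ..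
  qed (use Uc u in auto)
  ultimately show ?thesis by simp
qed

lemma psd_mat_smult_ket_bra_add:
  assumes u: "u \<in> carrier_vec n" and nu: "(\<Sum>i<n. cmod (u $ i) ^ 2) = 1"
    and v: "v \<in> carrier_vec n" and nv: "(\<Sum>i<n. cmod (v $ i) ^ 2) = 1"
    and orth: "(\<Sum>i<n. u $ i * cnj (v $ i)) = 0"
    and lam: "lam \<ge> 0" and lam': "lam' \<ge> 0"
  shows "psd_mat (complex_of_real lam \<cdot>\<^sub>m ket_bra u + complex_of_real lam' \<cdot>\<^sub>m ket_bra v)"
proof -
  obtain U where U: "unitary_mat n U" and n1: "1 < n"
    and c0: "\<And>i. i < n \<Longrightarrow> U $$ (i,0) = u $ i" and c1: "\<And>i. i < n \<Longrightarrow> U $$ (i,1) = v $ i"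
    using unitary_mat_with_two_columns[OF u nu v nv orth] by metis
  have Uc: "U \<in> carrier_mat n n" using U unitary_mat_carrier by auto
  define d where "d i = (if i = 0 then lam else if i = 1 then lam' else 0)" for i :: nat
  have "psd_mat (U * mat_diag n (\<lambda>i. complex_of_real (d i)) * mat_adjoint U)"
    by (rule psd_matI[OF U]) (simp add: d_def lam lam')
  moreover have "complex_of_real lam \<cdot>\<^sub>m ket_bra u + complex_of_real lam' \<cdot>\<^sub>m ket_bra v
      = U * mat_diag n (\<lambda>i. complex_of_real (d i)) * mat_adjoint U"
  proof (rule eq_matI)
    fix i j assume "i < dim_row (U * mat_diag n (\<lambda>i. complex_of_real (d i)) * mat_adjoint U)"
      "j < dim_col (U * mat_diag n (\<lambda>i. complex_of_real (d i)) * mat_adjoint U)"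
    hence i: "i < n" and j: "j < n" using Uc by auto
    have "(U * mat_diag n (\<lambda>i. complex_of_real (d i)) * mat_adjoint U) $$ (i,j)
        = (\<Sum>l<n. (if l = 0 then U $$ (i,0) * complex_of_real lam * cnj (U $$ (j,0)) else 0)
             + (if l = 1 then U $$ (i,1) * complex_of_real lam' * cnj (U $$ (j,1)) else 0))"
      unfolding index_unitary_conj_mat_diag[OF Uc i j] by (rule sum.cong) (auto simp: d_def)
    also have "\<dots> = (complex_of_real lam \<cdot>\<^sub>m ket_bra u + complex_of_real lam' \<cdot>\<^sub>m ket_bra v) $$ (i,j)"
      using n1 c0 c1 i j u v by (simp add: sum.distrib index_ket_bra)
    finally show "(complex_of_real lam \<cdot>\<^sub>m ket_bra u + complex_of_real lam' \<cdot>\<^sub>m ket_bra v) $$ (i,j)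
      = (U * mat_diag n (\<lambda>i. complex_of_real (d i)) * mat_adjoint U) $$ (i,j)" ..
  qed (use Uc u v in auto)
  ultimately show ?thesis by simp
qed

lemma psd_mat_ket_bra:
  assumes v: "v \<in> carrier_vec n"
  shows "psd_mat (ket_bra v)"
proof (cases "v = 0\<^sub>v n")
  case True
  thus ?thesis using psd_mat_zero by simp
next
  case False
  then obtain a u where u: "u \<in> carrier_vec n" "(\<Sum>i<n. cmod (u $ i) ^ 2) = 1"
    and vu: "v = complex_of_real a \<cdot>\<^sub>v u"
    using vec_eq_smult_unit_vec[OF v] by metis
  have "ket_bra v = complex_of_real (a * a) \<cdot>\<^sub>m ket_bra u"
    unfolding vu ket_bra_smult by simp
  thus ?thesis using psd_mat_smult_ket_bra[OF u, of "a * a"] by simp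
qed

lemma psd_mat_ket_bra_add:
  assumes x: "x \<in> carrier_vec n" and y: "y \<in> carrier_vec n"
    and orth: "(\<Sum>i<n. x $ i * cnj (y $ i)) = 0"
  shows "psd_mat (ket_bra x + ket_bra y)"
proof (cases "x = 0\<^sub>v n \<or> y = 0\<^sub>v n")
  case True
  thus ?thesis using psd_mat_ket_bra[OF x] psd_mat_ket_bra[OF y] x y by auto
next
  case False
  then obtain a u where a: "a > 0" and u: "u \<in> carrier_vec n" "(\<Sum>i<n. cmod (u $ i) ^ 2) = 1"
    and xu: "x = complex_of_real a \<cdot>\<^sub>v u"
    using vec_eq_smult_unit_vec[OF x] by metis
  obtain b v where b: "b > 0" and v: "v \<in> carrier_vec n" "(\<Sum>i<n. cmod (v $ i) ^ 2) = 1"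
    and yv: "y = complex_of_real b \<cdot>\<^sub>v v"
    using vec_eq_smult_unit_vec[OF y] False by metis
  have "complex_of_real (a * b) * (\<Sum>i<n. u $ i * cnj (v $ i)) = (\<Sum>i<n. x $ i * cnj (y $ i))"
    unfolding xu yv sum_distrib_left using u v by (intro sum.cong) auto
  hence uv: "(\<Sum>i<n. u $ i * cnj (v $ i)) = 0" using orth a b by simp
  have "ket_bra x + ket_bra y
      = complex_of_real (a * a) \<cdot>\<^sub>m ket_bra u + complex_of_real (b * b) \<cdot>\<^sub>m ket_bra v"
    unfolding xu yv ket_bra_smult by simp
  thus ?thesis using psd_mat_smult_ket_bra_add[OF u v uv, of "a * a" "b * b"] by simp
qed

lemma mixture_commute: "A \<in> carrier_mat n m \<Longrightarrow> B \<in> carrier_mat n m \<Longrightarrow> mixture A B = mixture B A"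
  unfolding mixture_def by (simp add: comm_add_mat)

lemma mixture_mult_conj:
  assumes A: "A \<in> carrier_mat n n" and B: "B \<in> carrier_mat n n" and U: "U \<in> carrier_mat n m"
  shows "mat_adjoint U * mixture A B * U = mixture (mat_adjoint U * A * U) (mat_adjoint U * B * U)"
proof -
  have Uh: "mat_adjoint U \<in> carrier_mat m n" using U by simp
  have AB: "A + B \<in> carrier_mat n n" using B by simp
  have UA: "mat_adjoint U * A \<in> carrier_mat m n" and UB: "mat_adjoint U * B \<in> carrier_mat m n"
    using Uh A B by simp_all
  have UAB: "mat_adjoint U * A + mat_adjoint U * B \<in> carrier_mat m n" using UB by simp
  show ?thesis
    unfolding mixture_def mult_smult_distrib[OF Uh AB] mult_add_distrib_mat[OF Uh A B]
      mult_smult_assoc_mat[OF UAB U] add_mult_distrib_mat[OF UA UB U] ..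
qed

lemma mixture_ket_bra_eq_ket_bra_add:
  assumes \<psi>: "\<psi> \<in> carrier_vec n" and \<phi>: "\<phi> \<in> carrier_vec n" and \<mu>: "\<mu> * cnj \<mu> = 1"
  shows "mixture (ket_bra \<psi>) (ket_bra \<phi>)
       = ket_bra ((1/2) \<cdot>\<^sub>v (\<psi> + \<mu> \<cdot>\<^sub>v \<phi>)) + ket_bra ((1/2) \<cdot>\<^sub>v (\<psi> - \<mu> \<cdot>\<^sub>v \<phi>))"
proof (rule eq_matI)
  fix i j assume "i < dim_row (ket_bra ((1/2) \<cdot>\<^sub>v (\<psi> + \<mu> \<cdot>\<^sub>v \<phi>)) + ket_bra ((1/2) \<cdot>\<^sub>v (\<psi> - \<mu> \<cdot>\<^sub>v \<phi>)))"
    "j < dim_col (ket_bra ((1/2) \<cdot>\<^sub>v (\<psi> + \<mu> \<cdot>\<^sub>v \<phi>)) + ket_bra ((1/2) \<cdot>\<^sub>v (\<psi> - \<mu> \<cdot>\<^sub>v \<phi>)))"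
  hence i: "i < n" and j: "j < n" using \<psi> \<phi> by auto
  have "(ket_bra ((1/2) \<cdot>\<^sub>v (\<psi> + \<mu> \<cdot>\<^sub>v \<phi>)) + ket_bra ((1/2) \<cdot>\<^sub>v (\<psi> - \<mu> \<cdot>\<^sub>v \<phi>))) $$ (i,j)
      = (\<psi> $ i * cnj (\<psi> $ j) + (\<mu> * cnj \<mu>) * (\<phi> $ i * cnj (\<phi> $ j))) / 2"
    using \<psi> \<phi> i j by (simp add: ket_bra_def field_simps)
  thus "mixture (ket_bra \<psi>) (ket_bra \<phi>) $$ (i,j)
      = (ket_bra ((1/2) \<cdot>\<^sub>v (\<psi> + \<mu> \<cdot>\<^sub>v \<phi>)) + ket_bra ((1/2) \<cdot>\<^sub>v (\<psi> - \<mu> \<cdot>\<^sub>v \<phi>))) $$ (i,j)"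
    using \<psi> \<phi> i j \<mu> by (simp add: mixture_def index_ket_bra)
qed (use \<psi> \<phi> in \<open>auto simp: mixture_def\<close>)

lemma psd_mat_mixture_ket_bra:
  assumes \<psi>: "\<psi> \<in> carrier_vec n" and \<phi>: "\<phi> \<in> carrier_vec n"
    and norms: "(\<Sum>i<n. cmod (\<psi> $ i) ^ 2) = (\<Sum>i<n. cmod (\<phi> $ i) ^ 2)"
  shows "psd_mat (mixture (ket_bra \<psi>) (ket_bra \<phi>))"
proof -
  define c where "c = (\<Sum>i<n. \<psi> $ i * cnj (\<phi> $ i))"
  \<comment> \<open>the phase of \<open>c\<close>; it makes \<open>x\<close> and \<open>y\<close> below orthogonal\<close>
  define \<mu> where "\<mu> = (if c = 0 then 1 else c / complex_of_real (cmod c))"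
  have "cmod \<mu> = 1" unfolding \<mu>_def by (simp add: norm_divide)
  hence mu1: "\<mu> * cnj \<mu> = 1" using complex_norm_square[of \<mu>] by simp
  have muc: "\<mu> * cnj c = cnj \<mu> * c"
    unfolding \<mu>_def by (simp add: mult.commute)
  have cc: "cnj c = (\<Sum>i<n. \<phi> $ i * cnj (\<psi> $ i))" unfolding c_def by (simp add: mult.commute)
  define x where "x = (1/2) \<cdot>\<^sub>v (\<psi> + \<mu> \<cdot>\<^sub>v \<phi>)"
  define y where "y = (1/2) \<cdot>\<^sub>v (\<psi> - \<mu> \<cdot>\<^sub>v \<phi>)"
  have "(\<Sum>i<n. x $ i * cnj (y $ i))
      = ((\<Sum>i<n. \<psi> $ i * cnj (\<psi> $ i)) - (\<Sum>i<n. \<phi> $ i * cnj (\<phi> $ i))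
         + \<mu> * cnj c - cnj \<mu> * c) / 4"
  proof -
    have "x $ i * cnj (y $ i) = (\<psi> $ i * cnj (\<psi> $ i) - (\<mu> * cnj \<mu>) * (\<phi> $ i * cnj (\<phi> $ i))
        + \<mu> * (\<phi> $ i * cnj (\<psi> $ i)) - cnj \<mu> * (\<psi> $ i * cnj (\<phi> $ i))) / 4" if "i < n" for i
      using that \<psi> \<phi> unfolding x_def y_def by (simp add: field_simps)
    hence "(\<Sum>i<n. x $ i * cnj (y $ i)) = (\<Sum>i<n. (\<psi> $ i * cnj (\<psi> $ i) - \<phi> $ i * cnj (\<phi> $ i)
        + \<mu> * (\<phi> $ i * cnj (\<psi> $ i)) - cnj \<mu> * (\<psi> $ i * cnj (\<phi> $ i))) / 4)"
      using mu1 by (intro sum.cong) auto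
    also have "\<dots> = ((\<Sum>i<n. \<psi> $ i * cnj (\<psi> $ i)) - (\<Sum>i<n. \<phi> $ i * cnj (\<phi> $ i))
         + \<mu> * cnj c - cnj \<mu> * c) / 4"
      unfolding cc unfolding c_def by (simp add: sum.distrib sum_subtractf sum_distrib_left flip: sum_divide_distrib)
    finally show ?thesis .
  qed
  also have "\<dots> = 0" using arg_cong[OF norms, of complex_of_real] muc by (simp flip: complex_norm_square)
  finally have orth: "(\<Sum>i<n. x $ i * cnj (y $ i)) = 0" .
  have "x \<in> carrier_vec n" "y \<in> carrier_vec n" unfolding x_def y_def using \<psi> \<phi> by auto
  hence "psd_mat (ket_bra x + ket_bra y)" using psd_mat_ket_bra_add orth by blast
  thus ?thesis
    unfolding x_def y_def mixture_ket_bra_eq_ket_bra_add[OF \<psi> \<phi> mu1] .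
qed

section \<open>Traces against the mixture of two pure states\<close>

lemma mat_powr_ket_bra:
  assumes \<psi>: "\<psi> \<in> carrier_vec n" and n\<psi>: "(\<Sum>i<n. cmod (\<psi> $ i) ^ 2) = 1"
  shows "mat_powr (ket_bra \<psi>) p = ket_bra \<psi>"
proof -
  obtain U d where U: "unitary_mat n U" and d: "\<forall>i<n. d i \<ge> 0"
    and A: "ket_bra \<psi> = U * mat_diag n (\<lambda>i. complex_of_real (d i)) * mat_adjoint U"
    using psd_matE[OF psd_mat_ket_bra[OF \<psi>] ket_bra_carrier[OF \<psi>]] by metis
  have Uc: "U \<in> carrier_mat n n" using U unitary_mat_carrier by auto
  define a where "a = mat_adjoint U *\<^sub>v \<psi>"
  have a: "a \<in> carrier_vec n" unfolding a_def using Uc \<psi> by (simp add: mult_mat_vec_carrier[of _ n n])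
  have na: "(\<Sum>i<n. cmod (a $ i) ^ 2) = 1"
    unfolding a_def sum_cmod_sq_unitary_mult_vec[OF unitary_mat_adjoint[OF U] \<psi>] by (rule n\<psi>)
  have "ket_bra a = mat_diag n (\<lambda>i. complex_of_real (d i))"
    unfolding a_def ket_bra_mat_adjoint_mult_vec[OF Uc \<psi>, symmetric]
    by (subst A) (rule unitary_mat_conj_cancel[OF U mat_diag_dim])
  hence ent: "a $ i * cnj (a $ j) = (if i = j then complex_of_real (d j) else 0)" if "i < n" "j < n" for i j
    using that a index_ket_bra[OF a that] by (simp add: mat_diag_def)
  have "d i powr p = d i" if i: "i < n" for i
  proof -
    have "complex_of_real (d i) = complex_of_real (cmod (a $ i) ^ 2)"
      using ent[OF i i] by (simp flip: complex_norm_square)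
    hence di: "d i = cmod (a $ i) ^ 2" by (simp only: of_real_eq_iff)
    show ?thesis
    proof (cases "a $ i = 0")
      case False
      have "a $ j = 0" if "j \<in> {..<n} - {i}" for j using ent[OF i, of j] that False by simp
      hence "(\<Sum>j<n. cmod (a $ j) ^ 2) = cmod (a $ i) ^ 2"
        using i by (simp add: sum.remove[of _ i])
      thus ?thesis using na di by simp
    qed (use di in simp)
  qed
  hence "mat_diag n (\<lambda>i. complex_of_real (d i powr p)) = mat_diag n (\<lambda>i. complex_of_real (d i))"
    by (intro mat_diag_cong) simp
  thus ?thesis using mat_powr_eq[OF U d A] A by simp
qed

lemma eigenvalue_half_if_weights_differ:
  fixes a b :: "nat \<Rightarrow> complex" and d :: "nat \<Rightarrow> real"
  assumes diag: "\<And>i j. i < n \<Longrightarrow> j < n \<Longrightarrow>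
      a i * cnj (a j) + b i * cnj (b j) = (if i = j then complex_of_real (2 * d i) else 0)"
    and na: "(\<Sum>i<n. cmod (a i) ^ 2) = 1" and nb: "(\<Sum>i<n. cmod (b i) ^ 2) = 1"
    and i: "i < n" and ne: "cmod (a i) \<noteq> cmod (b i)"
  shows "d i = 1/2"
proof -
  \<comment> \<open>Apply \<open>aa\<^sup>* + bb\<^sup>* = 2 diag(d)\<close> to \<open>a\<close> and \<open>b\<close>: \<open>t a\<^sub>i = c b\<^sub>i\<close> and \<open>t b\<^sub>i = c\<^sup>* a\<^sub>i\<close>, whose moduli force \<open>t = 0\<close>.\<close>
  define c where "c = (\<Sum>j<n. cnj (b j) * a j)"
  define t where "t = 2 * d i - 1"
  have apply_diag: "(\<Sum>j<n. (a i * cnj (a j) + b i * cnj (b j)) * v j) = 2 * complex_of_real (d i) * v i"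
    for v :: "nat \<Rightarrow> complex"
  proof -
    have "(\<Sum>j<n. (a i * cnj (a j) + b i * cnj (b j)) * v j)
        = (\<Sum>j<n. if j = i then 2 * complex_of_real (d i) * v i else 0)"
      by (rule sum.cong) (use diag i in auto)
    thus ?thesis using i by simp
  qed
  have sum_sq: "(\<Sum>j<n. cnj (v j) * v j) = 1" if "(\<Sum>j<n. cmod (v j) ^ 2) = 1" for v
    using arg_cong[OF that, of complex_of_real] by (simp add: mult.commute flip: complex_norm_square)
  have "(\<Sum>j<n. (a i * cnj (a j) + b i * cnj (b j)) * a j) = a i * (\<Sum>j<n. cnj (a j) * a j) + b i * c"
    unfolding c_def by (simp add: sum_distrib_left sum.distrib ring_distribs mult_ac)
  hence "complex_of_real t * a i = c * b i"
    using apply_diag[of a] sum_sq[OF na] unfolding t_def by (simp add: algebra_simps)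
  hence ra: "\<bar>t\<bar> * cmod (a i) = cmod c * cmod (b i)" by (metis norm_mult norm_of_real)
  have "(\<Sum>j<n. (a i * cnj (a j) + b i * cnj (b j)) * b j) = a i * cnj c + b i * (\<Sum>j<n. cnj (b j) * b j)"
    unfolding c_def by (simp add: sum_distrib_left sum.distrib ring_distribs mult_ac)
  hence "complex_of_real t * b i = cnj c * a i"
    using apply_diag[of b] sum_sq[OF nb] unfolding t_def by (simp add: algebra_simps)
  hence rb: "\<bar>t\<bar> * cmod (b i) = cmod c * cmod (a i)" by (metis complex_mod_cnj norm_mult norm_of_real)
  have "(\<bar>t\<bar> + cmod c) * (cmod (a i) - cmod (b i)) = 0" using ra rb by (simp add: algebra_simps)
  hence "\<bar>t\<bar> + cmod c = 0" using ne by simp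
  hence "t = 0" by (smt (verit) norm_ge_zero)
  thus ?thesis unfolding t_def by simp
qed

lemma sum_weight_eq_sum_eigenvalue:
  fixes a b :: "nat \<Rightarrow> complex" and d :: "nat \<Rightarrow> real"
  assumes diag: "\<And>i j. i < n \<Longrightarrow> j < n \<Longrightarrow>
      a i * cnj (a j) + b i * cnj (b j) = (if i = j then complex_of_real (2 * d i) else 0)"
    and na: "(\<Sum>i<n. cmod (a i) ^ 2) = 1" and nb: "(\<Sum>i<n. cmod (b i) ^ 2) = 1"
  shows "(\<Sum>i<n. cmod (a i) ^ 2 * g (d i)) = (\<Sum>i<n. d i * g (d i))"
proof -
  have "(\<Sum>i<n. (cmod (a i) ^ 2 - cmod (b i) ^ 2) * g (d i))
      = (\<Sum>i<n. (cmod (a i) ^ 2 - cmod (b i) ^ 2) * g (1/2))"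
  proof (rule sum.cong[OF refl])
    fix i assume "i \<in> {..<n}"
    thus "(cmod (a i) ^ 2 - cmod (b i) ^ 2) * g (d i) = (cmod (a i) ^ 2 - cmod (b i) ^ 2) * g (1/2)"
      by (cases "cmod (a i) = cmod (b i)") (simp_all add: eigenvalue_half_if_weights_differ[OF diag na nb])
  qed
  also have "\<dots> = 0" using na nb by (simp add: sum_subtractf flip: sum_distrib_right)
  finally have diff: "(\<Sum>i<n. cmod (a i) ^ 2 * g (d i)) = (\<Sum>i<n. cmod (b i) ^ 2 * g (d i))"
    by (simp add: left_diff_distrib sum_subtractf)
  have "cmod (a i) ^ 2 + cmod (b i) ^ 2 = 2 * d i" if "i < n" for i
  proof -
    have "complex_of_real (cmod (a i) ^ 2 + cmod (b i) ^ 2) = complex_of_real (2 * d i)"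
      using diag[OF that that] by (simp flip: complex_norm_square)
    thus ?thesis by (simp only: of_real_eq_iff)
  qed
  hence "(\<Sum>i<n. cmod (a i) ^ 2 * g (d i)) + (\<Sum>i<n. cmod (b i) ^ 2 * g (d i))
      = 2 * (\<Sum>i<n. d i * g (d i))"
    by (simp add: sum_distrib_left flip: sum.distrib distrib_right mult.assoc)
  thus ?thesis using diff by simp
qed

lemma mtrace_ket_bra_mult_mat_powr_mixture:
  assumes \<psi>: "\<psi> \<in> carrier_vec n" and n\<psi>: "(\<Sum>i<n. cmod (\<psi> $ i) ^ 2) = 1"
    and \<phi>: "\<phi> \<in> carrier_vec n" and n\<phi>: "(\<Sum>i<n. cmod (\<phi> $ i) ^ 2) = 1"
  defines "M \<equiv> mixture (ket_bra \<psi>) (ket_bra \<phi>)"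
  shows "mtrace (ket_bra \<psi> * mat_powr M (p - 1)) = mtrace (mat_powr M p)"
proof -
  have "M \<in> carrier_mat n n" unfolding M_def mixture_def using \<psi> \<phi> by simp
  then obtain U d where U: "unitary_mat n U" and d: "\<forall>i<n. d i \<ge> 0"
    and MU: "M = U * mat_diag n (\<lambda>i. complex_of_real (d i)) * mat_adjoint U"
    using psd_matE[OF psd_mat_mixture_ket_bra[OF \<psi> \<phi>]] n\<psi> n\<phi> unfolding M_def by metis
  have Uc: "U \<in> carrier_mat n n" using U unitary_mat_carrier by auto
  define a where "a = mat_adjoint U *\<^sub>v \<psi>"
  define b where "b = mat_adjoint U *\<^sub>v \<phi>"
  have ab: "a \<in> carrier_vec n" "b \<in> carrier_vec n"
    unfolding a_def b_def using Uc \<psi> \<phi> by (simp_all add: mult_mat_vec_carrier[of _ n n])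
  have na: "(\<Sum>i<n. cmod (a $ i) ^ 2) = 1"
    unfolding a_def sum_cmod_sq_unitary_mult_vec[OF unitary_mat_adjoint[OF U] \<psi>] by (rule n\<psi>)
  have nb: "(\<Sum>i<n. cmod (b $ i) ^ 2) = 1"
    unfolding b_def sum_cmod_sq_unitary_mult_vec[OF unitary_mat_adjoint[OF U] \<phi>] by (rule n\<phi>)
  have "mixture (ket_bra a) (ket_bra b) = mat_adjoint U * M * U"
    unfolding M_def a_def b_def mixture_mult_conj[OF ket_bra_carrier[OF \<psi>] ket_bra_carrier[OF \<phi>] Uc]
      ket_bra_mat_adjoint_mult_vec[OF Uc \<psi>] ket_bra_mat_adjoint_mult_vec[OF Uc \<phi>] ..
  also have "\<dots> = mat_diag n (\<lambda>i. complex_of_real (d i))"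
    unfolding MU by (rule unitary_mat_conj_cancel[OF U mat_diag_dim])
  finally have "a $ i * cnj (a $ j) + b $ i * cnj (b $ j) = (if i = j then complex_of_real (2 * d i) else 0)"
    if "i < n" "j < n" for i j
    using that ab index_ket_bra[OF ab(1) that] index_ket_bra[OF ab(2) that]
    by (auto simp: mixture_def mat_diag_def dest!: arg_cong[of _ _ "\<lambda>A. A $$ (i,j)"])
  note weights = sum_weight_eq_sum_eigenvalue[OF this na nb, of "\<lambda>x. x powr (p - 1)"]
  have "(\<Sum>i<n. cmod (a $ i) ^ 2 * d i powr (p - 1)) = (\<Sum>i<n. d i * d i powr (p - 1))"
    using weights by simp
  also have "\<dots> = (\<Sum>i<n. d i powr p)"
    by (rule sum.cong) (use d in \<open>simp_all add: powr_mult_base\<close>)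
  finally have powr_sum: "(\<Sum>i<n. cmod (a $ i) ^ 2 * d i powr (p - 1)) = (\<Sum>i<n. d i powr p)" .
  have "mtrace (ket_bra \<psi> * mat_powr M (p - 1))
      = complex_of_real (\<Sum>i<n. cmod (a $ i) ^ 2 * d i powr (p - 1))"
    unfolding mat_powr_eq[OF U d MU] mtrace_ket_bra_mult_unitary_conj_mat_diag[OF Uc \<psi>] a_def by simp
  also have "\<dots> = complex_of_real (\<Sum>i<n. d i powr p)" unfolding powr_sum ..
  also have "\<dots> = mtrace (mat_powr M p)"
    by (rule mtrace_mat_powr[OF U d MU, symmetric])
  finally show ?thesis .
qed

section \<open>The Jensen--Shannon divergences of two pure states\<close>

lemma ab_entropy_pure_state:
  assumes "\<psi> \<in> carrier_vec n" "(\<Sum>i<n. cmod (\<psi> $ i) ^ 2) = 1"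
  shows "ab_entropy a b (ket_bra \<psi>) = 0"
  unfolding ab_entropy_def mat_powr_ket_bra[OF assms] mtrace_ket_bra[OF assms(1)] assms(2) by simp

lemma ab_rel_entropy_pure_state_mixture:
  assumes \<psi>: "\<psi> \<in> carrier_vec n" and n\<psi>: "(\<Sum>i<n. cmod (\<psi> $ i) ^ 2) = 1"
    and \<phi>: "\<phi> \<in> carrier_vec n" and n\<phi>: "(\<Sum>i<n. cmod (\<phi> $ i) ^ 2) = 1"
  defines "M \<equiv> mixture (ket_bra \<psi>) (ket_bra \<phi>)"
  shows "ab_rel_entropy (2 - a) b (ket_bra \<psi>) M = ab_entropy a b M"
proof -
  have exponent: "1 - (2 - a) = a - 1" by simp
  have "ab_rel_entropy (2 - a) b (ket_bra \<psi>) M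
      = 1 / ((a - 1) * b) * (1 - Re (mtrace (mat_powr M a)) powr b)"
    unfolding ab_rel_entropy_def exponent mat_powr_ket_bra[OF \<psi> n\<psi>] M_def
      mtrace_ket_bra_mult_mat_powr_mixture[OF \<psi> n\<psi> \<phi> n\<phi>] by simp
  also have "\<dots> = ab_entropy a b M"
    unfolding ab_entropy_def by (simp add: divide_simps) (simp add: algebra_simps)
  finally show ?thesis .
qed

theorem proposition1:
  fixes \<psi> \<phi> :: "complex vec" and n :: nat and \<alpha> \<beta> :: real
  assumes "\<psi> \<in> carrier_vec n" and "\<phi> \<in> carrier_vec n"
    and "normalized_vec \<psi>" and "normalized_vec \<phi>"
    and "0 < \<alpha>" and "\<alpha> < 2" and "\<alpha> \<noteq> 1"
    and "\<beta> \<noteq> 0"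
  shows "JS_ab \<alpha> \<beta> (ket_bra \<psi>) (ket_bra \<phi>) = JS'_ab (2 - \<alpha>) \<beta> (ket_bra \<psi>) (ket_bra \<phi>)"
proof -
  note \<psi> = assms(1) and \<phi> = assms(2)
  have n\<psi>: "(\<Sum>i<n. cmod (\<psi> $ i) ^ 2) = 1" and n\<phi>: "(\<Sum>i<n. cmod (\<phi> $ i) ^ 2) = 1"
    using assms(3,4) \<psi> \<phi> unfolding normalized_vec_def by auto
  let ?M = "mixture (ket_bra \<psi>) (ket_bra \<phi>)"
  have "ab_rel_entropy (2 - \<alpha>) \<beta> (ket_bra \<phi>) ?M = ab_entropy \<alpha> \<beta> ?M"
    using ab_rel_entropy_pure_state_mixture[OF \<phi> n\<phi> \<psi> n\<psi>]
      mixture_commute[OF ket_bra_carrier[OF \<phi>] ket_bra_carrier[OF \<psi>]] by simp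
  thus ?thesis
    unfolding JS_ab_def JS'_ab_def ab_entropy_pure_state[OF \<psi> n\<psi>] ab_entropy_pure_state[OF \<phi> n\<phi>]
      ab_rel_entropy_pure_state_mixture[OF \<psi> n\<psi> \<phi> n\<phi>] by simp
qed

end
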